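(* In the online ADDIS setting of the context, assume the null $p$-values are conditionally uniformly conservative, that $\tau_j>\lambda_j\ge\alpha_j$ for all $j$, and that there is $\epsilon>0$ with $\tau_j-\lambda_j>\epsilon$ for all $j$. Let $T_{\mathrm{stop}}$ be a stopping time with respect to $(\mathcal F^t)_{t\ge0}$ with $\mathbb E[T_{\mathrm{stop}}]<\infty$. Then any procedure that maintains $\widehat{\mathrm{FDP}}_{\mathrm{ADDIS}}(t)\le\alpha$ for all $t\in\mathbb N$ satisfies $\mathrm{mFDR}(T_{\mathrm{stop}})=\frac{\mathbb E[|\mathcal H_0\cap R(T_{\mathrm{stop}})|]}{\mathbb E[|R(T_{\mathrm{stop}})|\vee1]}\le\alpha$.
   Context: Let $P_1,P_2,\dots$ be $p$-values for hypotheses $H_1,H_2,\dots$, and let $\mathcal H_0\subseteq\mathbb N$ be the set of indices of true nulls. Fix $\alpha\in(0,1)$. Sequences $\{\alpha_j\},\{\lambda_j\},\{\tau_j\}$ in $[0,1]$ define $S_j=\mathbf 1\{P_j\le\tau_j\}$, $C_j=\mathbf 1\{P_j\le\lambda_j\}$, $R_j=\mathbf 1\{P_j\le\alpha_j\}$, $R(t)=\{j\le t:R_j=1\}$; $\mathcal F^t=\sigma(R_{1:t},C_{1:t},S_{1:t})$, $\mathcal F^0$ trivial; $\alpha_t,\lambda_t,\tau_t$ are $\mathcal F^{t-1}$-measurable. Null $p$-values are conditionally uniformly conservative if for every $t\in\mathcal H_0$ and all $x,\tau\in(0,1)$, $\Pr(P_t/\tau\le x\mid P_t\le\tau,\mathcal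 F^{t-1})\le x$. $\widehat{\mathrm{FDP}}_{\mathrm{ADDIS}}(t)=\big(\sum_{j\le t}\alpha_j\frac{\mathbf 1\{\lambda_j<P_j\le\tau_j\}}{\tau_j-\lambda_j}\big)/(|R(t)|\vee1)$. *)

theory Defs
  imports "HOL-Probability.Probability"
begin

definition rej_set :: "(nat \<Rightarrow> 'a \<Rightarrow> real) \<Rightarrow> (nat \<Rightarrow> 'a \<Rightarrow> real) \<Rightarrow> nat \<Rightarrow> 'a \<Rightarrow> nat set"
  where "rej_set P al t \<omega> = {j \<in> {1..t}. P j \<omega> \<le> al j \<omega>}"

definition addis_events ::
  "'a measure \<Rightarrow> (nat \<Rightarrow> 'a \<Rightarrow> real) \<Rightarrow> (nat \<Rightarrow> 'a \<Rightarrow> real) \<Rightarrow> (nat \<Rightarrow> 'a \<Rightarrow> real)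
   \<Rightarrow> (nat \<Rightarrow> 'a \<Rightarrow> real) \<Rightarrow> nat \<Rightarrow> 'a set set"
  where "addis_events M P al la ta j =
    {{\<omega> \<in> space M. P j \<omega> \<le> al j \<omega>},
     {\<omega> \<in> space M. P j \<omega> \<le> la j \<omega>},
     {\<omega> \<in> space M. P j \<omega> \<le> ta j \<omega>}}"

text \<open>F^t = sigma(R_{1:t}, C_{1:t}, S_{1:t}); F^0 is trivial. Since R_j, C_j, S_j are
  indicators, the generated sigma-algebra is the one generated by the corresponding events.\<close>
definition addis_filtration ::
  "'a measure \<Rightarrow> (nat \<Rightarrow> 'a \<Rightarrow> real) \<Rightarrow> (nat \<Rightarrow> 'a \<Rightarrow> real) \<Rightarrow> (nat \<Rightarrow> 'a \<Rightarrow> real)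
   \<Rightarrow> (nat \<Rightarrow> 'a \<Rightarrow> real) \<Rightarrow> nat \<Rightarrow> 'a measure"
  where "addis_filtration M P al la ta t =
    sigma (space M) (\<Union>j\<in>{1..t}. addis_events M P al la ta j)"

definition FDP_hat_ADDIS ::
  "(nat \<Rightarrow> 'a \<Rightarrow> real) \<Rightarrow> (nat \<Rightarrow> 'a \<Rightarrow> real) \<Rightarrow> (nat \<Rightarrow> 'a \<Rightarrow> real)
   \<Rightarrow> (nat \<Rightarrow> 'a \<Rightarrow> real) \<Rightarrow> nat \<Rightarrow> 'a \<Rightarrow> real"
  where "FDP_hat_ADDIS P al la ta t \<omega> =
    (\<Sum>j\<in>{1..t}. al j \<omega> * (if la j \<omega> < P j \<omega> \<and> P j \<omega> \<le> ta j \<omega> then 1 else 0)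
                   / (ta j \<omega> - la j \<omega>))
    / real (max (card (rej_set P al t \<omega>)) 1)"

text \<open>Conditional uniform conservativeness: for null t and x, tau in (0,1),
  Pr(P_t/tau \<le> x | P_t \<le> tau, F^{t-1}) \<le> x, i.e.
  E[1{P_t/tau \<le> x, P_t \<le> tau} | F^{t-1}] \<le> x * E[1{P_t \<le> tau} | F^{t-1}] almost surely.\<close>
definition cond_unif_conservative ::
  "'a measure \<Rightarrow> (nat \<Rightarrow> 'a measure) \<Rightarrow> (nat \<Rightarrow> 'a \<Rightarrow> real) \<Rightarrow> nat set \<Rightarrow> bool"
  where "cond_unif_conservative M F P H0 =
    (\<forall>t\<in>H0. t \<ge> 1 \<longrightarrow> (\<forall>x \<in> {0<..<1}. \<forall>\<tau> \<in> {0<..<1}.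
       AE \<omega> in M.
         real_cond_exp M (F (t - 1))
            (indicator {\<omega>' \<in> space M. P t \<omega>' / \<tau> \<le> x \<and> P t \<omega>' \<le> \<tau>}) \<omega>
         \<le> x * real_cond_exp M (F (t - 1)) (indicator {\<omega>' \<in> space M. P t \<omega>' \<le> \<tau>}) \<omega>))"

end

theory Submission
  imports Defs
begin

text \<open>For a null index j, F^{j-1}-measurable thresholds s \<le> \<tau>_j and a bounded F^{j-1}-measurable
  weight w \<ge> 0, conditional uniform conservativeness gives E[w 1{P_j \<le> s}] \<le> E[w (s/\<tau>_j) 1{P_j \<le> \<tau>_j}]:
  for constant thresholds this is the hypothesis, and random ones are reduced to constants on the
  cells of a fine grid. Applying this with s = \<alpha>_j and with s = \<lambda>_j yields
  E[w 1{P_j \<le> \<alpha>_j}] \<le> E[w \<alpha>_j 1{\<lambda>_j < P_j \<le> \<tau>_j} / (\<tau>_j - \<lambda>_j)].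
  As {j \<le> T} \<in> F^{j-1}, we may take w = 1{j \<le> T}; summing over null j \<le> N bounds the expected number
  of false rejections before min N T by the expected ADDIS numerator at min N T, which is at most
  \<alpha> (|R(T)| \<or> 1) pointwise. Dominated convergence in N, with the integrable bound T, finishes the proof.\<close>

definition cond_conservative :: "'a measure \<Rightarrow> 'a measure \<Rightarrow> ('a \<Rightarrow> real) \<Rightarrow> bool" where
  "cond_conservative M G p \<longleftrightarrow> (\<forall>x\<in>{0<..<1}. \<forall>\<tau>\<in>{0<..<1}. AE \<omega> in M.
     real_cond_exp M G (indicator {\<omega>' \<in> space M. p \<omega>' / \<tau> \<le> x \<and> p \<omega>' \<le> \<tau>}) \<omega>
       \<le> x * real_cond_exp M G (indicator {\<omega>' \<in> space M. p \<omega>' \<le> \<tau>}) \<omega>)"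

lemma cond_unif_conservativeD:
  "cond_unif_conservative M F P H0 \<Longrightarrow> t \<in> H0 \<Longrightarrow> 1 \<le> t \<Longrightarrow> cond_conservative M (F (t - 1)) (P t)"
  unfolding cond_unif_conservative_def cond_conservative_def by blast

lemma integral_weighted_indicator_le_of_cond_exp_le:
  fixes w :: "'a \<Rightarrow> real"
  assumes "prob_space M" and G: "subalgebra M G"
    and [measurable]: "A \<in> sets M" "B \<in> sets M"
    and le: "AE \<omega> in M. real_cond_exp M G (indicator A) \<omega> \<le> x * real_cond_exp M G (indicator B) \<omega>"
    and w: "w \<in> borel_measurable G" "\<And>\<omega>. \<omega> \<in> space M \<Longrightarrow> 0 \<le> w \<omega> \<and> w \<omega> \<le> K"
  shows "(\<integral>\<omega>. w \<omega> * indicator A \<omega> \<partial>M) \<le> x * (\<integral>\<omega>. w \<omega> * indicator B \<omega> \<partial>M)"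
proof -
  interpret prob_space M by fact
  interpret finite_measure_subalgebra M G by unfold_locales (rule G)
  have [measurable]: "w \<in> borel_measurable M" by (rule measurable_from_subalg[OF G w(1)])
  have "0 \<le> K" using w(2) not_empty by fastforce
  have int: "integrable M (\<lambda>\<omega>. w \<omega> * indicator C \<omega>)" if [measurable]: "C \<in> sets M" for C
    by (rule integrable_const_bound[where B=K]) (use w(2) \<open>0 \<le> K\<close> in \<open>auto simp: indicator_def\<close>)
  note cond_exp = real_cond_exp_intg[OF int w(1) borel_measurable_indicator]
  have "(\<integral>\<omega>. w \<omega> * indicator A \<omega> \<partial>M) = (\<integral>\<omega>. w \<omega> * real_cond_exp M G (indicator A) \<omega> \<partial>M)"
    using cond_exp(2)[of A] by simp
  also have "\<dots> \<le> (\<integral>\<omega>. x * (w \<omega> * real_cond_exp M G (indicator B) \<omega>) \<partial>M)"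
  proof (rule integral_mono_AE)
    show "AE \<omega> in M. w \<omega> * real_cond_exp M G (indicator A) \<omega> \<le> x * (w \<omega> * real_cond_exp M G (indicator B) \<omega>)"
      using le AE_space
    proof eventually_elim
      case (elim \<omega>)
      then show ?case
        using mult_left_mono[OF elim(1), of "w \<omega>"] w(2)[OF elim(2)] by (simp add: mult.left_commute)
    qed
  qed (use cond_exp(1)[of A] cond_exp(1)[of B] in auto)
  also have "\<dots> = x * (\<integral>\<omega>. w \<omega> * indicator B \<omega> \<partial>M)"
    using cond_exp(2)[of B] by simp
  finally show ?thesis .
qed

lemma cond_conservative_integral_le_const:
  fixes w :: "'a \<Rightarrow> real"
  assumes "prob_space M" and G: "subalgebra M G"
    and p: "cond_conservative M G p" "p \<in> borel_measurable M"
    and w: "w \<in> borel_measurable G" "\<And>\<omega>. \<omega> \<in> space M \<Longrightarrow> 0 \<le> w \<omega> \<and> w \<omega> \<le> K"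
    and cd: "0 < c" "c < d" "d < 1"
  shows "(\<integral>\<omega>. w \<omega> * indicator {\<omega>\<in>space M. p \<omega> \<le> c} \<omega> \<partial>M)
     \<le> (c / d) * (\<integral>\<omega>. w \<omega> * indicator {\<omega>\<in>space M. p \<omega> \<le> d} \<omega> \<partial>M)"
proof (rule integral_weighted_indicator_le_of_cond_exp_le[OF assms(1) G _ _ _ w])
  have "c / d \<in> {0<..<1}" "d \<in> {0<..<1}"
    using cd by auto
  from p(1)[unfolded cond_conservative_def, rule_format, OF this]
  have "AE \<omega> in M. real_cond_exp M G (indicator {\<omega>' \<in> space M. p \<omega>' / d \<le> c / d \<and> p \<omega>' \<le> d}) \<omega>
      \<le> c / d * real_cond_exp M G (indicator {\<omega>\<in>space M. p \<omega> \<le> d}) \<omega>" .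
  moreover have "{\<omega>' \<in> space M. p \<omega>' / d \<le> c / d \<and> p \<omega>' \<le> d} = {\<omega>\<in>space M. p \<omega> \<le> c}"
    using cd by (auto simp: divide_le_cancel)
  ultimately show "AE \<omega> in M. real_cond_exp M G (indicator {\<omega>\<in>space M. p \<omega> \<le> c}) \<omega>
      \<le> c / d * real_cond_exp M G (indicator {\<omega>\<in>space M. p \<omega> \<le> d}) \<omega>"
    by simp
  show "{\<omega>\<in>space M. p \<omega> \<le> c} \<in> sets M" "{\<omega>\<in>space M. p \<omega> \<le> d} \<in> sets M"
    using p(2) by measurable
qed

lemma integral_mono_by_partition:
  fixes f g :: "'a \<Rightarrow> real"
  assumes I: "finite I" and \<kappa>: "\<And>\<omega>. \<omega> \<in> space M \<Longrightarrow> \<kappa> \<omega> \<in> I"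
    and cells: "\<And>i. i \<in> I \<Longrightarrow> {\<omega>\<in>space M. \<kappa> \<omega> = i} \<in> sets M"
    and "integrable M f" "integrable M g"
    and le: "\<And>i. i \<in> I \<Longrightarrow> (\<integral>\<omega>. f \<omega> * indicator {\<omega>\<in>space M. \<kappa> \<omega> = i} \<omega> \<partial>M)
                \<le> (\<integral>\<omega>. g \<omega> * indicator {\<omega>\<in>space M. \<kappa> \<omega> = i} \<omega> \<partial>M)"
  shows "(\<integral>\<omega>. f \<omega> \<partial>M) \<le> (\<integral>\<omega>. g \<omega> \<partial>M)"
proof -
  have split: "(\<integral>\<omega>. h \<omega> \<partial>M) = (\<Sum>i\<in>I. (\<integral>\<omega>. h \<omega> * indicator {\<omega>\<in>space M. \<kappa> \<omega> = i} \<omega> \<partial>M))"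
    if h: "integrable M h" for h :: "'a \<Rightarrow> real"
  proof -
    have "(\<integral>\<omega>. h \<omega> \<partial>M) = (\<integral>\<omega>. (\<Sum>i\<in>I. h \<omega> * indicator {\<omega>\<in>space M. \<kappa> \<omega> = i} \<omega>) \<partial>M)"
    proof (rule Bochner_Integration.integral_cong[OF refl])
      fix \<omega> assume "\<omega> \<in> space M"
      then have "(\<Sum>i\<in>I. h \<omega> * indicator {\<omega>\<in>space M. \<kappa> \<omega> = i} \<omega>) = (\<Sum>i\<in>I. if i = \<kappa> \<omega> then h \<omega> else 0)"
        by (intro sum.cong) (auto simp: indicator_def)
      then show "h \<omega> = (\<Sum>i\<in>I. h \<omega> * indicator {\<omega>\<in>space M. \<kappa> \<omega> = i} \<omega>)"
        using \<kappa>[OF \<open>\<omega> \<in> space M\<close>] I by simp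
    qed
    also have "\<dots> = (\<Sum>i\<in>I. (\<integral>\<omega>. h \<omega> * indicator {\<omega>\<in>space M. \<kappa> \<omega> = i} \<omega> \<partial>M))"
    proof (rule Bochner_Integration.integral_sum)
      fix i assume "i \<in> I"
      from integrable_mult_indicator[OF cells[OF this] h]
      show "integrable M (\<lambda>\<omega>. h \<omega> * indicator {\<omega>\<in>space M. \<kappa> \<omega> = i} \<omega>)"
        by (simp add: mult.commute)
    qed
    finally show ?thesis .
  qed
  show ?thesis
    unfolding split[OF assms(4)] split[OF assms(5)] by (rule sum_mono) (rule le)
qed

text \<open>On a cell of the grid,
  random thresholds s \<le> t can be replaced by the constants grid_above n s > s and
  grid_below n t < t, at the price of the factor grid_ratio n s t, which tends to s/t.\<close>

definition grid_above :: "nat \<Rightarrow> real \<Rightarrow> real" where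
  "grid_above n x = (of_int \<lfloor>x * (real n + 1)\<rfloor> + 1) / (real n + 1)"

definition grid_below :: "nat \<Rightarrow> real \<Rightarrow> real" where
  "grid_below n x = (of_int \<lceil>x * (real n + 1)\<rceil> - 1) / (real n + 1)"

definition grid_ratio :: "nat \<Rightarrow> real \<Rightarrow> real \<Rightarrow> real" where
  "grid_ratio n s t = (if grid_above n s < grid_below n t then grid_above n s / grid_below n t else 1)"

lemma grid_above_bounds: "x < grid_above n x \<and> grid_above n x \<le> x + 1 / (real n + 1)"
proof -
  have "x * (real n + 1) < of_int \<lfloor>x * (real n + 1)\<rfloor> + 1"
       "of_int \<lfloor>x * (real n + 1)\<rfloor> + 1 \<le> x * (real n + 1) + 1"
    by linarith+
  then show ?thesis
    unfolding grid_above_def by (simp add: pos_less_divide_eq pos_divide_le_eq distrib_right)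
qed

lemma grid_below_bounds: "x - 1 / (real n + 1) \<le> grid_below n x \<and> grid_below n x < x"
proof -
  have "of_int \<lceil>x * (real n + 1)\<rceil> - 1 < x * (real n + 1)"
       "x * (real n + 1) - 1 \<le> of_int \<lceil>x * (real n + 1)\<rceil> - 1"
    by linarith+
  then show ?thesis
    unfolding grid_below_def by (simp add: pos_le_divide_eq pos_divide_less_eq left_diff_distrib)
qed

lemma grid_above_tendsto: "(\<lambda>n. grid_above n x) \<longlonglongrightarrow> x"
proof (rule tendsto_sandwich[where f="\<lambda>_. x" and h="\<lambda>n. x + 1 / (real n + 1)"])
  show "(\<lambda>n. x + 1 / (real n + 1)) \<longlonglongrightarrow> x"
    using LIMSEQ_inverse_real_of_nat_add[of x] by (simp add: inverse_eq_divide add.commute)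
qed (use grid_above_bounds in \<open>auto intro!: always_eventually less_imp_le\<close>)

lemma grid_below_tendsto: "(\<lambda>n. grid_below n x) \<longlonglongrightarrow> x"
proof (rule tendsto_sandwich[where f="\<lambda>n. x - 1 / (real n + 1)" and h="\<lambda>_. x"])
  show "(\<lambda>n. x - 1 / (real n + 1)) \<longlonglongrightarrow> x"
    using LIMSEQ_inverse_real_of_nat_add_minus[of x] by (simp add: inverse_eq_divide add.commute)
qed (use grid_below_bounds in \<open>auto intro!: always_eventually less_imp_le\<close>)

lemma grid_ratio_weight_bounds:
  assumes "0 \<le> s" "0 \<le> w" "w \<le> K"
  shows "0 \<le> w * grid_ratio n s t \<and> w * grid_ratio n s t \<le> K"
proof -
  have "0 \<le> grid_ratio n s t" "grid_ratio n s t \<le> 1"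
    using assms(1) grid_above_bounds[of s n] by (auto simp: grid_ratio_def)
  then show ?thesis
    using assms(2,3) mult_left_le[of "grid_ratio n s t" w] by auto
qed

lemma grid_ratio_tendsto:
  assumes "0 \<le> s" "s \<le> t" "0 < t"
  shows "(\<lambda>n. grid_ratio n s t) \<longlonglongrightarrow> s / t"
proof (cases "s < t")
  case True
  have "\<forall>\<^sub>F n in sequentially. 0 < grid_below n t - grid_above n s"
    using True by (intro order_tendstoD(1)[OF tendsto_diff[OF grid_below_tendsto grid_above_tendsto]]) simp
  then have "\<forall>\<^sub>F n in sequentially. grid_above n s / grid_below n t = grid_ratio n s t"
    by eventually_elim (auto simp: grid_ratio_def)
  moreover have "(\<lambda>n. grid_above n s / grid_below n t) \<longlonglongrightarrow> s / t"
    using assms by (intro tendsto_divide grid_above_tendsto grid_below_tendsto) auto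
  ultimately show ?thesis
    by (rule Lim_transform_eventually[rotated])
next
  case False
  then have "grid_ratio n s t = 1" for n
    using grid_above_bounds[of s n] grid_below_bounds[of t n] assms by (auto simp: grid_ratio_def)
  then show ?thesis
    using False assms by simp
qed

lemma cond_conservative_integral_le_on_set:
  fixes w s t :: "'a \<Rightarrow> real"
  assumes "prob_space M" and G: "subalgebra M G"
    and p: "cond_conservative M G p" "p \<in> borel_measurable M"
    and w: "w \<in> borel_measurable G" "\<And>\<omega>. \<omega> \<in> space M \<Longrightarrow> 0 \<le> w \<omega> \<and> w \<omega> \<le> K"
    and [measurable]: "s \<in> borel_measurable M" "t \<in> borel_measurable M"
    and st: "\<And>\<omega>. \<omega> \<in> space M \<Longrightarrow> s \<omega> \<le> t \<omega>"
    and C: "C \<in> sets G" "\<And>\<omega>. \<omega> \<in> C \<Longrightarrow> s \<omega> \<le> c \<and> d \<le> t \<omega>"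
    and cd: "0 < c" "d < 1"
  shows "(\<integral>\<omega>. w \<omega> * indicator C \<omega> * indicator {\<omega>\<in>space M. p \<omega> \<le> s \<omega>} \<omega> \<partial>M)
     \<le> (if c < d then c / d else 1) * (\<integral>\<omega>. w \<omega> * indicator C \<omega> * indicator {\<omega>\<in>space M. p \<omega> \<le> t \<omega>} \<omega> \<partial>M)"
proof -
  interpret prob_space M by fact
  define v where "v \<omega> = w \<omega> * indicator C \<omega>" for \<omega>
  have vG: "v \<in> borel_measurable G"
    unfolding v_def using w(1) C(1) by measurable
  have [measurable]: "v \<in> borel_measurable M" "p \<in> borel_measurable M"
    using measurable_from_subalg[OF G vG] p(2) by auto
  have v: "0 \<le> v \<omega> \<and> v \<omega> \<le> K" if "\<omega> \<in> space M" for \<omega>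
    using w(2)[OF that] by (auto simp: v_def indicator_def)
  have "0 \<le> K" using v not_empty by fastforce
  have int: "integrable M (\<lambda>\<omega>. v \<omega> * indicator {\<omega>\<in>space M. p \<omega> \<le> r \<omega>} \<omega>)"
    if [measurable]: "r \<in> borel_measurable M" for r
    by (rule integrable_const_bound[where B=K]) (use v \<open>0 \<le> K\<close> in \<open>auto simp: indicator_def\<close>)
  have mono: "(\<integral>\<omega>. v \<omega> * indicator {\<omega>\<in>space M. p \<omega> \<le> r \<omega>} \<omega> \<partial>M)
      \<le> (\<integral>\<omega>. v \<omega> * indicator {\<omega>\<in>space M. p \<omega> \<le> r' \<omega>} \<omega> \<partial>M)"
    if [measurable]: "r \<in> borel_measurable M" "r' \<in> borel_measurable M"
      and le: "\<And>\<omega>. \<omega> \<in> C \<Longrightarrow> r \<omega> \<le> r' \<omega>" for r r'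
  proof (rule integral_mono[OF int int])
    fix \<omega> assume "\<omega> \<in> space M"
    then show "v \<omega> * indicator {\<omega>\<in>space M. p \<omega> \<le> r \<omega>} \<omega> \<le> v \<omega> * indicator {\<omega>\<in>space M. p \<omega> \<le> r' \<omega>} \<omega>"
      using w(2) le by (cases "\<omega> \<in> C") (auto simp: v_def indicator_def dest: order_trans)
  qed fact+
  show ?thesis
  proof (cases "c < d")
    case True
    have "(\<integral>\<omega>. v \<omega> * indicator {\<omega>\<in>space M. p \<omega> \<le> s \<omega>} \<omega> \<partial>M)
        \<le> (\<integral>\<omega>. v \<omega> * indicator {\<omega>\<in>space M. p \<omega> \<le> c} \<omega> \<partial>M)"
      using C(2) by (intro mono) auto
    also have "\<dots> \<le> (c / d) * (\<integral>\<omega>. v \<omega> * indicator {\<omega>\<in>space M. p \<omega> \<le> d} \<omega> \<partial>M)"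
      using cd True by (intro cond_conservative_integral_le_const[OF assms(1) G p vG v])
    also have "\<dots> \<le> (c / d) * (\<integral>\<omega>. v \<omega> * indicator {\<omega>\<in>space M. p \<omega> \<le> t \<omega>} \<omega> \<partial>M)"
      using C(2) cd True by (intro mult_left_mono mono) auto
    finally show ?thesis
      using True by (simp add: v_def)
  next
    case False
    have "(\<integral>\<omega>. v \<omega> * indicator {\<omega>\<in>space M. p \<omega> \<le> s \<omega>} \<omega> \<partial>M)
        \<le> (\<integral>\<omega>. v \<omega> * indicator {\<omega>\<in>space M. p \<omega> \<le> t \<omega>} \<omega> \<partial>M)"
      using st C(1) sets.sets_into_space[of C G] G by (intro mono) (auto simp: subalgebra_def)
    then show ?thesis
      using False by (simp add: v_def)
  qed
qed

lemma grid_index_bounds: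
  assumes "0 \<le> x" "x \<le> 1"
  shows "\<lfloor>x * (real n + 1)\<rfloor> \<in> {0..int n + 1}" "\<lceil>x * (real n + 1)\<rceil> \<in> {0..int n + 1}"
proof -
  have "x * (real n + 1) \<le> 1 * (real n + 1)"
    using assms by (intro mult_right_mono) auto
  from floor_mono[OF this] ceiling_mono[OF this]
  have "\<lfloor>x * (real n + 1)\<rfloor> \<le> int n + 1" "\<lceil>x * (real n + 1)\<rceil> \<le> int n + 1"
    by simp_all
  moreover have "0 \<le> x * (real n + 1)"
    using assms by simp
  ultimately show "\<lfloor>x * (real n + 1)\<rfloor> \<in> {0..int n + 1}" "\<lceil>x * (real n + 1)\<rceil> \<in> {0..int n + 1}"
    by auto
qed

lemma cond_conservative_grid_cell_le:
  fixes w s t :: "'a \<Rightarrow> real"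
  assumes "prob_space M" and G: "subalgebra M G"
    and p: "cond_conservative M G p" "p \<in> borel_measurable M"
    and w: "w \<in> borel_measurable G" "\<And>\<omega>. \<omega> \<in> space M \<Longrightarrow> 0 \<le> w \<omega> \<and> w \<omega> \<le> K"
    and st: "s \<in> borel_measurable G" "t \<in> borel_measurable G" "\<And>\<omega>. \<omega> \<in> space M \<Longrightarrow> s \<omega> \<le> t \<omega>"
    and ab: "0 \<le> a" "b \<le> int n + 1"
  defines "C \<equiv> {\<omega>\<in>space M. \<lfloor>s \<omega> * (real n + 1)\<rfloor> = a \<and> \<lceil>t \<omega> * (real n + 1)\<rceil> = b}"
  shows "(\<integral>\<omega>. w \<omega> * indicator {\<omega>\<in>space M. p \<omega> \<le> s \<omega>} \<omega> * indicator C \<omega> \<partial>M)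
     \<le> (\<integral>\<omega>. w \<omega> * grid_ratio n (s \<omega>) (t \<omega>) * indicator {\<omega>\<in>space M. p \<omega> \<le> t \<omega>} \<omega> * indicator C \<omega> \<partial>M)"
proof -
  define c where "c = (of_int a + 1) / (real n + 1)"
  define d where "d = (of_int b - 1) / (real n + 1)"
  have on_C: "grid_above n (s \<omega>) = c \<and> grid_below n (t \<omega>) = d" if "\<omega> \<in> C" for \<omega>
    using that unfolding grid_above_def grid_below_def c_def d_def C_def by auto
  have "C \<in> sets G"
  proof -
    have "{\<omega>\<in>space G. \<lfloor>s \<omega> * (real n + 1)\<rfloor> = a \<and> \<lceil>t \<omega> * (real n + 1)\<rceil> = b} \<in> sets G"
      using st(1,2) by measurable
    then show ?thesis
      using G by (simp add: C_def subalgebra_def)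
  qed
  moreover have "s \<omega> \<le> c \<and> d \<le> t \<omega>" if "\<omega> \<in> C" for \<omega>
    using on_C[OF that] grid_above_bounds[of "s \<omega>" n] grid_below_bounds[of "t \<omega>" n] by auto
  moreover have "0 < c" "d < 1"
    using ab by (simp_all add: c_def d_def field_simps)
  ultimately have "(\<integral>\<omega>. w \<omega> * indicator C \<omega> * indicator {\<omega>\<in>space M. p \<omega> \<le> s \<omega>} \<omega> \<partial>M)
      \<le> (if c < d then c / d else 1) * (\<integral>\<omega>. w \<omega> * indicator C \<omega> * indicator {\<omega>\<in>space M. p \<omega> \<le> t \<omega>} \<omega> \<partial>M)"
    using measurable_from_subalg[OF G] st
    by (intro cond_conservative_integral_le_on_set[OF assms(1) G p w]) auto
  also have "\<dots> = (\<integral>\<omega>. w \<omega> * grid_ratio n (s \<omega>) (t \<omega>) * indicator {\<omega>\<in>space M. p \<omega> \<le> t \<omega>} \<omega> * indicator C \<omega> \<partial>M)"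
    unfolding integral_mult_right_zero[symmetric]
    by (intro Bochner_Integration.integral_cong) (use on_C in \<open>auto simp: grid_ratio_def indicator_def\<close>)
  finally show ?thesis
    by (simp add: mult_ac)
qed

lemma cond_conservative_grid_le:
  fixes w s t :: "'a \<Rightarrow> real"
  assumes "prob_space M" and G: "subalgebra M G"
    and p: "cond_conservative M G p" "p \<in> borel_measurable M"
    and w: "w \<in> borel_measurable G" "\<And>\<omega>. \<omega> \<in> space M \<Longrightarrow> 0 \<le> w \<omega> \<and> w \<omega> \<le> K"
    and st: "s \<in> borel_measurable G" "t \<in> borel_measurable G"
      "\<And>\<omega>. \<omega> \<in> space M \<Longrightarrow> 0 \<le> s \<omega> \<and> s \<omega> \<le> t \<omega> \<and> t \<omega> \<le> 1"
  shows "(\<integral>\<omega>. w \<omega> * indicator {\<omega>\<in>space M. p \<omega> \<le> s \<omega>} \<omega> \<partial>M)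
     \<le> (\<integral>\<omega>. w \<omega> * grid_ratio n (s \<omega>) (t \<omega>) * indicator {\<omega>\<in>space M. p \<omega> \<le> t \<omega>} \<omega> \<partial>M)"
proof -
  interpret prob_space M by fact
  let ?N = "real n + 1"
  have [measurable]: "w \<in> borel_measurable M" "s \<in> borel_measurable M" "t \<in> borel_measurable M"
    "p \<in> borel_measurable M"
    using measurable_from_subalg[OF G] w(1) st(1,2) p(2) by auto
  have [measurable]: "(\<lambda>\<omega>. grid_ratio n (s \<omega>) (t \<omega>)) \<in> borel_measurable M"
    unfolding grid_ratio_def grid_above_def grid_below_def by measurable
  have "0 \<le> K" using w(2) not_empty by fastforce
  have weighted_ratio: "0 \<le> w \<omega> * grid_ratio n (s \<omega>) (t \<omega>) \<and> w \<omega> * grid_ratio n (s \<omega>) (t \<omega>) \<le> K"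
    if "\<omega> \<in> space M" for \<omega>
    using grid_ratio_weight_bounds st(3)[OF that] w(2)[OF that] by blast
  show ?thesis
  proof (rule integral_mono_by_partition[where I="{0..int n + 1} \<times> {0..int n + 1}"
        and \<kappa>="\<lambda>\<omega>. (\<lfloor>s \<omega> * ?N\<rfloor>, \<lceil>t \<omega> * ?N\<rceil>)"])
    show "(\<lfloor>s \<omega> * ?N\<rfloor>, \<lceil>t \<omega> * ?N\<rceil>) \<in> {0..int n + 1} \<times> {0..int n + 1}" if "\<omega> \<in> space M" for \<omega>
      using grid_index_bounds st(3)[OF that] by auto
    show "{\<omega>\<in>space M. (\<lfloor>s \<omega> * ?N\<rfloor>, \<lceil>t \<omega> * ?N\<rceil>) = i} \<in> sets M" for i
      by (simp add: prod_eq_iff) measurable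
    show "integrable M (\<lambda>\<omega>. w \<omega> * indicator {\<omega>\<in>space M. p \<omega> \<le> s \<omega>} \<omega>)"
      "integrable M (\<lambda>\<omega>. w \<omega> * grid_ratio n (s \<omega>) (t \<omega>) * indicator {\<omega>\<in>space M. p \<omega> \<le> t \<omega>} \<omega>)"
      using w(2) weighted_ratio \<open>0 \<le> K\<close>
      by (auto intro!: integrable_const_bound[where B=K] simp: indicator_def)
  next
    fix i assume "i \<in> {0..int n + 1} \<times> {0..int n + 1}"
    then show "(\<integral>\<omega>. w \<omega> * indicator {\<omega>\<in>space M. p \<omega> \<le> s \<omega>} \<omega> * indicator {\<omega>\<in>space M. (\<lfloor>s \<omega> * ?N\<rfloor>, \<lceil>t \<omega> * ?N\<rceil>) = i} \<omega> \<partial>M)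
      \<le> (\<integral>\<omega>. w \<omega> * grid_ratio n (s \<omega>) (t \<omega>) * indicator {\<omega>\<in>space M. p \<omega> \<le> t \<omega>} \<omega>
            * indicator {\<omega>\<in>space M. (\<lfloor>s \<omega> * ?N\<rfloor>, \<lceil>t \<omega> * ?N\<rceil>) = i} \<omega> \<partial>M)"
      using cond_conservative_grid_cell_le[OF assms(1) G p w st(1,2), of "fst i" "snd i" n] st(3)
      by (auto simp: prod_eq_iff)
  qed simp
qed

lemma cond_conservative_integral_le_random:
  fixes w s t :: "'a \<Rightarrow> real"
  assumes "prob_space M" and G: "subalgebra M G"
    and p: "cond_conservative M G p" "p \<in> borel_measurable M"
    and w: "w \<in> borel_measurable G" "\<And>\<omega>. \<omega> \<in> space M \<Longrightarrow> 0 \<le> w \<omega> \<and> w \<omega> \<le> K"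
    and st: "s \<in> borel_measurable G" "t \<in> borel_measurable G"
      "\<And>\<omega>. \<omega> \<in> space M \<Longrightarrow> 0 \<le> s \<omega> \<and> s \<omega> \<le> t \<omega> \<and> t \<omega> \<le> 1 \<and> 0 < t \<omega>"
  shows "(\<integral>\<omega>. w \<omega> * indicator {\<omega>\<in>space M. p \<omega> \<le> s \<omega>} \<omega> \<partial>M)
     \<le> (\<integral>\<omega>. w \<omega> * (s \<omega> / t \<omega>) * indicator {\<omega>\<in>space M. p \<omega> \<le> t \<omega>} \<omega> \<partial>M)"
proof (rule LIMSEQ_le_const)
  interpret prob_space M by fact
  have [measurable]: "w \<in> borel_measurable M" "s \<in> borel_measurable M" "t \<in> borel_measurable M"
    "p \<in> borel_measurable M"
    using measurable_from_subalg[OF G] w(1) st(1,2) p(2) by auto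
  have [measurable]: "(\<lambda>\<omega>. grid_ratio n (s \<omega>) (t \<omega>)) \<in> borel_measurable M" for n
    unfolding grid_ratio_def grid_above_def grid_below_def by measurable
  show "(\<lambda>n. \<integral>\<omega>. w \<omega> * grid_ratio n (s \<omega>) (t \<omega>) * indicator {\<omega>\<in>space M. p \<omega> \<le> t \<omega>} \<omega> \<partial>M)
      \<longlonglongrightarrow> (\<integral>\<omega>. w \<omega> * (s \<omega> / t \<omega>) * indicator {\<omega>\<in>space M. p \<omega> \<le> t \<omega>} \<omega> \<partial>M)"
  proof (rule integral_dominated_convergence[where w="\<lambda>_. K"])
    show "AE \<omega> in M. (\<lambda>n. w \<omega> * grid_ratio n (s \<omega>) (t \<omega>) * indicator {\<omega>\<in>space M. p \<omega> \<le> t \<omega>} \<omega>)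
        \<longlonglongrightarrow> w \<omega> * (s \<omega> / t \<omega>) * indicator {\<omega>\<in>space M. p \<omega> \<le> t \<omega>} \<omega>"
      using st(3) by (intro AE_I2 tendsto_mult tendsto_const grid_ratio_tendsto) auto
    show "AE \<omega> in M. norm (w \<omega> * grid_ratio n (s \<omega>) (t \<omega>) * indicator {\<omega>\<in>space M. p \<omega> \<le> t \<omega>} \<omega>) \<le> K" for n
    proof (rule AE_I2)
      fix \<omega> assume "\<omega> \<in> space M"
      then have "0 \<le> w \<omega> * grid_ratio n (s \<omega>) (t \<omega>) \<and> w \<omega> * grid_ratio n (s \<omega>) (t \<omega>) \<le> K"
        using grid_ratio_weight_bounds st(3) w(2) by blast
      then show "norm (w \<omega> * grid_ratio n (s \<omega>) (t \<omega>) * indicator {\<omega>\<in>space M. p \<omega> \<le> t \<omega>} \<omega>) \<le> K"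
        by (auto simp: indicator_def)
    qed
  qed auto
  show "\<exists>N. \<forall>n\<ge>N. (\<integral>\<omega>. w \<omega> * indicator {\<omega>\<in>space M. p \<omega> \<le> s \<omega>} \<omega> \<partial>M)
      \<le> (\<integral>\<omega>. w \<omega> * grid_ratio n (s \<omega>) (t \<omega>) * indicator {\<omega>\<in>space M. p \<omega> \<le> t \<omega>} \<omega> \<partial>M)"
    using cond_conservative_grid_le[OF assms(1) G p w st(1,2)] st(3) by blast
qed

lemma cond_conservative_integral_interval_ge:
  fixes v l \<tau> :: "'a \<Rightarrow> real"
  assumes "prob_space M" and G: "subalgebra M G"
    and p: "cond_conservative M G p" "p \<in> borel_measurable M"
    and v: "v \<in> borel_measurable G" "\<And>\<omega>. \<omega> \<in> space M \<Longrightarrow> 0 \<le> v \<omega> \<and> v \<omega> \<le> K"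
    and l\<tau>: "l \<in> borel_measurable G" "\<tau> \<in> borel_measurable G"
      "\<And>\<omega>. \<omega> \<in> space M \<Longrightarrow> 0 \<le> l \<omega> \<and> l \<omega> < \<tau> \<omega> \<and> \<tau> \<omega> \<le> 1"
  shows "(\<integral>\<omega>. v \<omega> * (1 - l \<omega> / \<tau> \<omega>) * indicator {\<omega>\<in>space M. p \<omega> \<le> \<tau> \<omega>} \<omega> \<partial>M)
     \<le> (\<integral>\<omega>. v \<omega> * indicator {\<omega>\<in>space M. l \<omega> < p \<omega> \<and> p \<omega> \<le> \<tau> \<omega>} \<omega> \<partial>M)"
proof -
  interpret prob_space M by fact
  note [measurable] = measurable_from_subalg[OF G v(1)] measurable_from_subalg[OF G l\<tau>(1)]
    measurable_from_subalg[OF G l\<tau>(2)] p(2)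
  let ?at = "\<lambda>r \<omega>. indicator {\<omega>\<in>space M. p \<omega> \<le> r \<omega>} \<omega> :: real"
  have ratio: "0 \<le> l \<omega> / \<tau> \<omega> \<and> l \<omega> / \<tau> \<omega> \<le> 1" if "\<omega> \<in> space M" for \<omega>
    using l\<tau>(3)[OF that] by auto
  have "0 \<le> K" using v(2) not_empty by fastforce
  have bounded: "integrable M (\<lambda>\<omega>. v \<omega> * f \<omega> * ?at r \<omega>)"
    if [measurable]: "f \<in> borel_measurable M" "r \<in> borel_measurable M"
      and f: "\<And>\<omega>. \<omega> \<in> space M \<Longrightarrow> 0 \<le> f \<omega> \<and> f \<omega> \<le> 1" for f r
  proof (rule integrable_const_bound[where B=K])
    show "AE \<omega> in M. norm (v \<omega> * f \<omega> * ?at r \<omega>) \<le> K"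
    proof (rule AE_I2)
      fix \<omega> assume "\<omega> \<in> space M"
      then have "0 \<le> v \<omega> * f \<omega>" "v \<omega> * f \<omega> \<le> K"
        using v(2) f mult_left_le[of "f \<omega>" "v \<omega>"] by (auto intro: order_trans)
      then show "norm (v \<omega> * f \<omega> * ?at r \<omega>) \<le> K"
        using \<open>0 \<le> K\<close> by (auto simp: indicator_def)
    qed
  qed measurable
  have int: "integrable M (\<lambda>\<omega>. v \<omega> * ?at \<tau> \<omega>)" "integrable M (\<lambda>\<omega>. v \<omega> * (l \<omega> / \<tau> \<omega>) * ?at \<tau> \<omega>)"
    "integrable M (\<lambda>\<omega>. v \<omega> * ?at l \<omega>)"
    using bounded[of "\<lambda>_. 1"] bounded[of "\<lambda>\<omega>. l \<omega> / \<tau> \<omega>"] ratio by auto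
  have "(\<integral>\<omega>. v \<omega> * (1 - l \<omega> / \<tau> \<omega>) * ?at \<tau> \<omega> \<partial>M)
      = (\<integral>\<omega>. v \<omega> * ?at \<tau> \<omega> \<partial>M) - (\<integral>\<omega>. v \<omega> * (l \<omega> / \<tau> \<omega>) * ?at \<tau> \<omega> \<partial>M)"
    unfolding Bochner_Integration.integral_diff[OF int(1,2), symmetric]
    by (rule Bochner_Integration.integral_cong) (simp_all add: algebra_simps)
  also have "\<dots> \<le> (\<integral>\<omega>. v \<omega> * ?at \<tau> \<omega> \<partial>M) - (\<integral>\<omega>. v \<omega> * ?at l \<omega> \<partial>M)"
    using v l\<tau>(3) less_imp_le
    by (intro diff_left_mono cond_conservative_integral_le_random[OF assms(1) G p v(1) _ l\<tau>(1,2)]) force+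
  also have "\<dots> = (\<integral>\<omega>. v \<omega> * indicator {\<omega>\<in>space M. l \<omega> < p \<omega> \<and> p \<omega> \<le> \<tau> \<omega>} \<omega> \<partial>M)"
    unfolding Bochner_Integration.integral_diff[OF int(1,3), symmetric]
  proof (rule Bochner_Integration.integral_cong[OF refl])
    fix \<omega> assume "\<omega> \<in> space M"
    with l\<tau>(3)[OF this]
    show "v \<omega> * ?at \<tau> \<omega> - v \<omega> * ?at l \<omega> = v \<omega> * indicator {\<omega>\<in>space M. l \<omega> < p \<omega> \<and> p \<omega> \<le> \<tau> \<omega>} \<omega>"
      by (auto simp: indicator_def)
  qed
  finally show ?thesis .
qed

lemma cond_conservative_integral_le_addis:
  fixes w a l \<tau> :: "'a \<Rightarrow> real"
  assumes "prob_space M" and G: "subalgebra M G"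
    and p: "cond_conservative M G p" "p \<in> borel_measurable M"
    and w: "w \<in> borel_measurable G" "\<And>\<omega>. \<omega> \<in> space M \<Longrightarrow> 0 \<le> w \<omega> \<and> w \<omega> \<le> K"
    and thresholds: "a \<in> borel_measurable G" "l \<in> borel_measurable G" "\<tau> \<in> borel_measurable G"
      "\<And>\<omega>. \<omega> \<in> space M \<Longrightarrow> 0 \<le> a \<omega> \<and> a \<omega> \<le> l \<omega> \<and> l \<omega> < \<tau> \<omega> \<and> \<tau> \<omega> \<le> 1"
    and gap: "0 < \<epsilon>" "\<And>\<omega>. \<omega> \<in> space M \<Longrightarrow> \<epsilon> \<le> \<tau> \<omega> - l \<omega>"
  shows "(\<integral>\<omega>. w \<omega> * indicator {\<omega>\<in>space M. p \<omega> \<le> a \<omega>} \<omega> \<partial>M)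
     \<le> (\<integral>\<omega>. w \<omega> * (a \<omega> * (if l \<omega> < p \<omega> \<and> p \<omega> \<le> \<tau> \<omega> then 1 else 0) / (\<tau> \<omega> - l \<omega>)) \<partial>M)"
proof -
  have a_le_\<tau>: "0 \<le> a \<omega> \<and> a \<omega> \<le> \<tau> \<omega> \<and> \<tau> \<omega> \<le> 1 \<and> 0 < \<tau> \<omega>"
    and l_le_\<tau>: "0 \<le> l \<omega> \<and> l \<omega> < \<tau> \<omega> \<and> \<tau> \<omega> \<le> 1" if "\<omega> \<in> space M" for \<omega>
    using thresholds(4)[OF that] by auto
  define v where "v \<omega> = w \<omega> * a \<omega> / (\<tau> \<omega> - l \<omega>)" for \<omega>
  have vG: "v \<in> borel_measurable G"
    unfolding v_def using w(1) thresholds(1-3) by measurable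
  have v: "0 \<le> v \<omega> \<and> v \<omega> \<le> K / \<epsilon>" if "\<omega> \<in> space M" for \<omega>
  proof -
    have "a \<omega> / (\<tau> \<omega> - l \<omega>) \<le> 1 / \<epsilon>"
      using thresholds(4)[OF that] gap(1) gap(2)[OF that] by (intro frac_le) auto
    then show ?thesis
      using w(2)[OF that] thresholds(4)[OF that] mult_mono[of "w \<omega>" K "a \<omega> / (\<tau> \<omega> - l \<omega>)" "1 / \<epsilon>"]
      by (auto simp: v_def)
  qed
  have "(\<integral>\<omega>. w \<omega> * indicator {\<omega>\<in>space M. p \<omega> \<le> a \<omega>} \<omega> \<partial>M)
      \<le> (\<integral>\<omega>. w \<omega> * (a \<omega> / \<tau> \<omega>) * indicator {\<omega>\<in>space M. p \<omega> \<le> \<tau> \<omega>} \<omega> \<partial>M)"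
    by (rule cond_conservative_integral_le_random[OF assms(1) G p w thresholds(1,3) a_le_\<tau>])
  also have "\<dots> = (\<integral>\<omega>. v \<omega> * (1 - l \<omega> / \<tau> \<omega>) * indicator {\<omega>\<in>space M. p \<omega> \<le> \<tau> \<omega>} \<omega> \<partial>M)"
  proof (rule Bochner_Integration.integral_cong[OF refl])
    fix \<omega> assume "\<omega> \<in> space M"
    then have "\<tau> \<omega> - l \<omega> \<noteq> 0" "\<tau> \<omega> \<noteq> 0"
      using l_le_\<tau> by force+
    then show "w \<omega> * (a \<omega> / \<tau> \<omega>) * indicator {\<omega>\<in>space M. p \<omega> \<le> \<tau> \<omega>} \<omega>
        = v \<omega> * (1 - l \<omega> / \<tau> \<omega>) * indicator {\<omega>\<in>space M. p \<omega> \<le> \<tau> \<omega>} \<omega>"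
      unfolding v_def by (simp add: divide_simps)
  qed
  also have "\<dots> \<le> (\<integral>\<omega>. v \<omega> * indicator {\<omega>\<in>space M. l \<omega> < p \<omega> \<and> p \<omega> \<le> \<tau> \<omega>} \<omega> \<partial>M)"
    by (rule cond_conservative_integral_interval_ge[OF assms(1) G p vG v thresholds(2,3) l_le_\<tau>])
  also have "\<dots> = (\<integral>\<omega>. w \<omega> * (a \<omega> * (if l \<omega> < p \<omega> \<and> p \<omega> \<le> \<tau> \<omega> then 1 else 0) / (\<tau> \<omega> - l \<omega>)) \<partial>M)"
    by (rule Bochner_Integration.integral_cong) (auto simp: v_def indicator_def)
  finally show ?thesis .
qed

lemma space_addis_filtration [simp]: "space (addis_filtration M P al la ta t) = space M"
  unfolding addis_filtration_def by (rule space_measure_of_conv)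

lemma subalgebra_addis_filtration:
  assumes P: "\<And>j. 1 \<le> j \<Longrightarrow> P j \<in> borel_measurable M"
    and predictable: "\<And>j. 1 \<le> j \<Longrightarrow> al j \<in> borel_measurable (addis_filtration M P al la ta (j - 1)) \<and>
      la j \<in> borel_measurable (addis_filtration M P al la ta (j - 1)) \<and>
      ta j \<in> borel_measurable (addis_filtration M P al la ta (j - 1))"
  shows "subalgebra M (addis_filtration M P al la ta t)"
proof (induction t rule: less_induct)
  case (less t)
  have events: "addis_events M P al la ta j \<subseteq> sets M" if "j \<in> {1..t}" for j
  proof -
    have sub: "subalgebra M (addis_filtration M P al la ta (j - 1))"
      using that by (intro less.IH) auto
    have "1 \<le> j"
      using that by simp
    then have [measurable]: "al j \<in> borel_measurable M" "la j \<in> borel_measurable M" "ta j \<in> borel_measurable M"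
      using measurable_from_subalg[OF sub] predictable by blast+
    have [measurable]: "P j \<in> borel_measurable M"
      using P that by auto
    show ?thesis
      unfolding addis_events_def by auto
  qed
  then have "(\<Union>j\<in>{1..t}. addis_events M P al la ta j) \<subseteq> Pow (space M)"
    using sets.sets_into_space by blast
  then have "sets (addis_filtration M P al la ta t)
      = sigma_sets (space M) (\<Union>j\<in>{1..t}. addis_events M P al la ta j)"
    unfolding addis_filtration_def by (rule sets_measure_of)
  also have "\<dots> \<subseteq> sets M"
    by (rule sets.sigma_sets_subset) (use events in blast)
  finally show ?case
    by (simp add: subalgebra_def)
qed

lemma stopping_time_ge_sets:
  fixes F :: "nat \<Rightarrow> 'a measure"
  assumes "stopping_time F T" "1 \<le> j"
  shows "{\<omega>\<in>space (F (j - 1)). j \<le> T \<omega>} \<in> sets (F (j - 1))"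
proof -
  have "Measurable.pred (F (j - 1)) (\<lambda>\<omega>. j - 1 < T \<omega>)"
    using stopping_timeD2[OF assms(1)] .
  moreover have "j - 1 < T \<omega> \<longleftrightarrow> j \<le> T \<omega>" for \<omega>
    using assms(2) by linarith
  ultimately show ?thesis
    by (simp add: pred_def)
qed

lemma sum_stopped_le_budget:
  fixes e :: "nat \<Rightarrow> real" and T N :: nat
  assumes e: "\<And>j. 1 \<le> j \<Longrightarrow> 0 \<le> e j"
    and budget: "\<And>t. 1 \<le> t \<Longrightarrow> (\<Sum>j\<in>{1..t}. e j) \<le> \<alpha> * real (max (card {j\<in>{1..t}. r j}) 1)"
    and "0 \<le> \<alpha>"
  shows "(\<Sum>j\<in>{1..N}. of_bool (j \<le> T) * e j) \<le> \<alpha> * real (max (card {j\<in>{1..T}. r j}) 1)"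
proof -
  have "(\<Sum>j\<in>{1..N}. of_bool (j \<le> T) * e j) = (\<Sum>j\<in>{1..N} \<inter> {j. j \<le> T}. e j)"
    by simp
  also have "\<dots> \<le> (\<Sum>j\<in>{1..T}. e j)"
    by (rule sum_mono2) (use e in auto)
  also have "\<dots> \<le> \<alpha> * real (max (card {j\<in>{1..T}. r j}) 1)"
    using budget[of T] \<open>0 \<le> \<alpha>\<close> by (cases "T = 0") auto
  finally show ?thesis .
qed

lemma measurable_count_space_of_integrable:
  fixes T :: "'a \<Rightarrow> nat"
  assumes "integrable M (\<lambda>\<omega>. real (T \<omega>))"
  shows "T \<in> measurable M (count_space UNIV)"
proof -
  have "{\<omega>\<in>space M. real (T \<omega>) = real n} \<in> sets M" for n
    using borel_measurable_integrable[OF assms] by measurable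
  then show ?thesis
    by (auto simp: measurable_count_space_eq2_countable vimage_def Int_def conj_commute)
qed

lemma borel_measurable_card_stopped:
  fixes T :: "'a \<Rightarrow> nat"
  assumes "T \<in> measurable M (count_space UNIV)"
    and rej: "\<And>j. 1 \<le> j \<Longrightarrow> {\<omega>\<in>space M. rej j \<omega>} \<in> sets M"
  shows "(\<lambda>\<omega>. real (card (S \<inter> {j\<in>{1..T \<omega>}. rej j \<omega>}))) \<in> borel_measurable M"
proof (rule measurable_compose_countable'[OF _ assms(1)])
  fix n :: nat
  have "(\<lambda>\<omega>. \<Sum>j\<in>S \<inter> {1..n}. indicator {\<omega>\<in>space M. rej j \<omega>} \<omega> :: real) \<in> borel_measurable M"
    using rej by (intro borel_measurable_sum borel_measurable_indicator) auto
  moreover have "(\<Sum>j\<in>S \<inter> {1..n}. indicator {\<omega>\<in>space M. rej j \<omega>} \<omega> :: real)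
      = real (card (S \<inter> {j\<in>{1..n}. rej j \<omega>}))" if "\<omega> \<in> space M" for \<omega>
    using that by (simp add: indicator_def of_bool_def[symmetric] Int_def conj_ac)
  ultimately show "(\<lambda>\<omega>. real (card (S \<inter> {j\<in>{1..n}. rej j \<omega>}))) \<in> borel_measurable M"
    by (rule measurable_cong[THEN iffD1, rotated]) simp
qed simp

lemma card_filter_atLeastAtMost_le:
  assumes "n \<le> m"
  shows "card (S \<inter> {j\<in>{1..n}. P j}) \<le> m"
proof -
  have "card (S \<inter> {j\<in>{1..n}. P j}) \<le> card {1..m}"
    by (rule card_mono) (use assms in auto)
  then show ?thesis
    by simp
qed

lemma integrable_max_card_stopped:
  fixes T :: "'a \<Rightarrow> nat"
  assumes "finite_measure M" and T: "integrable M (\<lambda>\<omega>. real (T \<omega>))"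
    and rej: "\<And>j. 1 \<le> j \<Longrightarrow> {\<omega>\<in>space M. rej j \<omega>} \<in> sets M"
  shows "integrable M (\<lambda>\<omega>. real (max (card {j\<in>{1..T \<omega>}. rej j \<omega>}) 1))"
proof (rule Bochner_Integration.integrable_bound[OF _ _ AE_I2])
  show "integrable M (\<lambda>\<omega>. real (T \<omega>) + 1)"
    by (rule Bochner_Integration.integrable_add[OF T finite_measure.integrable_const[OF assms(1)]])
  show "norm (real (max (card {j\<in>{1..T \<omega>}. rej j \<omega>}) 1)) \<le> norm (real (T \<omega>) + 1)" for \<omega>
    using card_filter_atLeastAtMost_le[where n="T \<omega>" and m="T \<omega>" and S=UNIV and P="\<lambda>j. rej j \<omega>"] by simp
  show "(\<lambda>\<omega>. real (max (card {j\<in>{1..T \<omega>}. rej j \<omega>}) 1)) \<in> borel_measurable M"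
    unfolding of_nat_max of_nat_1
    by (rule borel_measurable_max[OF borel_measurable_const
          borel_measurable_card_stopped[OF measurable_count_space_of_integrable[OF T] rej, where S=UNIV,
            unfolded Int_UNIV_left]])
qed

lemma integral_truncated_null_rejections_le:
  fixes T :: "'a \<Rightarrow> nat" and e :: "nat \<Rightarrow> 'a \<Rightarrow> real"
  assumes "prob_space M"
    and A: "\<And>j. {\<omega>\<in>space M. j \<le> T \<omega>} \<in> sets M"
    and rej: "\<And>j. 1 \<le> j \<Longrightarrow> {\<omega>\<in>space M. rej j \<omega>} \<in> sets M"
    and e: "\<And>j. 1 \<le> j \<Longrightarrow> e j \<in> borel_measurable M"
      "\<And>j \<omega>. 1 \<le> j \<Longrightarrow> \<omega> \<in> space M \<Longrightarrow> 0 \<le> e j \<omega> \<and> e j \<omega> \<le> B"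
    and null: "\<And>j. 1 \<le> j \<Longrightarrow> j \<in> H0 \<Longrightarrow>
      (\<integral>\<omega>. indicator {\<omega>\<in>space M. j \<le> T \<omega>} \<omega> * indicator {\<omega>\<in>space M. rej j \<omega>} \<omega> \<partial>M)
        \<le> (\<integral>\<omega>. indicator {\<omega>\<in>space M. j \<le> T \<omega>} \<omega> * e j \<omega> \<partial>M)"
    and budget: "\<And>t \<omega>. 1 \<le> t \<Longrightarrow> \<omega> \<in> space M \<Longrightarrow>
      (\<Sum>j\<in>{1..t}. e j \<omega>) \<le> \<alpha> * real (max (card {j\<in>{1..t}. rej j \<omega>}) 1)"
    and "0 \<le> \<alpha>"
    and D: "integrable M (\<lambda>\<omega>. real (max (card {j\<in>{1..T \<omega>}. rej j \<omega>}) 1))"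
  shows "(\<integral>\<omega>. (\<Sum>j\<in>{1..N} \<inter> H0. indicator {\<omega>\<in>space M. j \<le> T \<omega>} \<omega> * indicator {\<omega>\<in>space M. rej j \<omega>} \<omega>) \<partial>M)
    \<le> \<alpha> * (\<integral>\<omega>. real (max (card {j\<in>{1..T \<omega>}. rej j \<omega>}) 1) \<partial>M)"
proof -
  interpret prob_space M by fact
  let ?A = "\<lambda>j. {\<omega>\<in>space M. j \<le> T \<omega>}"
  have int_Ae: "integrable M (\<lambda>\<omega>. indicator (?A j) \<omega> * e j \<omega>)" if "1 \<le> j" for j
  proof -
    have "integrable M (e j)"
      using e[OF that] by (intro integrable_const_bound[where B=B] AE_I2) auto
    from integrable_mult_indicator[OF A this] show ?thesis
      by simp
  qed
  have "(\<integral>\<omega>. (\<Sum>j\<in>{1..N} \<inter> H0. indicator (?A j) \<omega> * indicator {\<omega>\<in>space M. rej j \<omega>} \<omega> :: real) \<partial>M)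
      = (\<Sum>j\<in>{1..N} \<inter> H0. (\<integral>\<omega>. indicator (?A j) \<omega> * indicator {\<omega>\<in>space M. rej j \<omega>} \<omega> \<partial>M))"
  proof (rule Bochner_Integration.integral_sum)
    fix j assume "j \<in> {1..N} \<inter> H0"
    then have "?A j \<inter> {\<omega>\<in>space M. rej j \<omega>} \<in> sets M"
      using A rej by auto
    then show "integrable M (\<lambda>\<omega>. indicator (?A j) \<omega> * indicator {\<omega>\<in>space M. rej j \<omega>} \<omega> :: real)"
      unfolding indicator_inter_arith[symmetric] by (intro integrable_real_indicator) (auto simp: less_top[symmetric])
  qed
  also have "\<dots> \<le> (\<Sum>j\<in>{1..N} \<inter> H0. (\<integral>\<omega>. indicator (?A j) \<omega> * e j \<omega> \<partial>M))"
    using null by (intro sum_mono) auto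
  also have "\<dots> \<le> (\<Sum>j\<in>{1..N}. (\<integral>\<omega>. indicator (?A j) \<omega> * e j \<omega> \<partial>M))"
    using e by (intro sum_mono2 integral_nonneg_AE AE_I2) auto
  also have "\<dots> = (\<integral>\<omega>. (\<Sum>j\<in>{1..N}. indicator (?A j) \<omega> * e j \<omega>) \<partial>M)"
    using int_Ae by (intro Bochner_Integration.integral_sum[symmetric]) auto
  also have "\<dots> \<le> (\<integral>\<omega>. \<alpha> * real (max (card {j\<in>{1..T \<omega>}. rej j \<omega>}) 1) \<partial>M)"
  proof (rule integral_mono)
    show "integrable M (\<lambda>\<omega>. \<Sum>j\<in>{1..N}. indicator (?A j) \<omega> * e j \<omega>)"
      using int_Ae by (intro Bochner_Integration.integrable_sum) auto
    fix \<omega> assume "\<omega> \<in> space M"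
    have "(\<Sum>j\<in>{1..N}. of_bool (j \<le> T \<omega>) * e j \<omega>) \<le> \<alpha> * real (max (card {j\<in>{1..T \<omega>}. rej j \<omega>}) 1)"
      by (rule sum_stopped_le_budget) (use e budget \<open>\<omega> \<in> space M\<close> \<open>0 \<le> \<alpha>\<close> in auto)
    then show "(\<Sum>j\<in>{1..N}. indicator (?A j) \<omega> * e j \<omega>) \<le> \<alpha> * real (max (card {j\<in>{1..T \<omega>}. rej j \<omega>}) 1)"
      using \<open>\<omega> \<in> space M\<close> by (simp add: indicator_def)
  qed (rule integrable_mult_right[OF D])
  finally show ?thesis
    by simp
qed

lemma stopped_mFDR_le:
  fixes T :: "'a \<Rightarrow> nat" and e :: "nat \<Rightarrow> 'a \<Rightarrow> real"
  assumes "prob_space M"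
    and T: "integrable M (\<lambda>\<omega>. real (T \<omega>))"
    and rej: "\<And>j. 1 \<le> j \<Longrightarrow> {\<omega>\<in>space M. rej j \<omega>} \<in> sets M"
    and e: "\<And>j. 1 \<le> j \<Longrightarrow> e j \<in> borel_measurable M"
      "\<And>j \<omega>. 1 \<le> j \<Longrightarrow> \<omega> \<in> space M \<Longrightarrow> 0 \<le> e j \<omega> \<and> e j \<omega> \<le> B"
    and null: "\<And>j. 1 \<le> j \<Longrightarrow> j \<in> H0 \<Longrightarrow>
      (\<integral>\<omega>. indicator {\<omega>\<in>space M. j \<le> T \<omega>} \<omega> * indicator {\<omega>\<in>space M. rej j \<omega>} \<omega> \<partial>M)
        \<le> (\<integral>\<omega>. indicator {\<omega>\<in>space M. j \<le> T \<omega>} \<omega> * e j \<omega> \<partial>M)"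
    and budget: "\<And>t \<omega>. 1 \<le> t \<Longrightarrow> \<omega> \<in> space M \<Longrightarrow>
      (\<Sum>j\<in>{1..t}. e j \<omega>) \<le> \<alpha> * real (max (card {j\<in>{1..t}. rej j \<omega>}) 1)"
    and "0 \<le> \<alpha>"
  shows "(\<integral>\<omega>. real (card (H0 \<inter> {j\<in>{1..T \<omega>}. rej j \<omega>})) \<partial>M)
    / (\<integral>\<omega>. real (max (card {j\<in>{1..T \<omega>}. rej j \<omega>}) 1) \<partial>M) \<le> \<alpha>"
proof -
  interpret prob_space M by fact
  let ?R = "\<lambda>\<omega>. {j\<in>{1..T \<omega>}. rej j \<omega>}"
  let ?D = "\<lambda>\<omega>. real (max (card (?R \<omega>)) 1)"
  define V :: "nat \<Rightarrow> 'a \<Rightarrow> real" where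
    "V N \<omega> = (\<Sum>j\<in>{1..N} \<inter> H0. indicator {\<omega>\<in>space M. j \<le> T \<omega>} \<omega> * indicator {\<omega>\<in>space M. rej j \<omega>} \<omega>)"
    for N \<omega>
  have A: "{\<omega>\<in>space M. j \<le> T \<omega>} \<in> sets M" for j
    using measurable_count_space_of_integrable[OF T] by measurable
  have D: "integrable M ?D"
    by (rule integrable_max_card_stopped[OF _ T rej]) unfold_locales
  have V_eq: "V N \<omega> = real (card (H0 \<inter> {j\<in>{1..min N (T \<omega>)}. rej j \<omega>}))" if "\<omega> \<in> space M" for N \<omega>
  proof -
    have "V N \<omega> = (\<Sum>j\<in>{1..N} \<inter> H0. of_bool (j \<le> T \<omega> \<and> rej j \<omega>))"
      unfolding V_def using that by (intro sum.cong) (auto simp: indicator_def)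
    also have "\<dots> = real (card (({1..N} \<inter> H0) \<inter> {j. j \<le> T \<omega> \<and> rej j \<omega>}))"
      by simp
    also have "({1..N} \<inter> H0) \<inter> {j. j \<le> T \<omega> \<and> rej j \<omega>} = H0 \<inter> {j\<in>{1..min N (T \<omega>)}. rej j \<omega>}"
      by auto
    finally show ?thesis .
  qed
  have "(\<lambda>N. \<integral>\<omega>. V N \<omega> \<partial>M) \<longlonglongrightarrow> (\<integral>\<omega>. real (card (H0 \<inter> ?R \<omega>)) \<partial>M)"
  proof (rule integral_dominated_convergence[where w="\<lambda>\<omega>. real (T \<omega>)"])
    show "AE \<omega> in M. (\<lambda>N. V N \<omega>) \<longlonglongrightarrow> real (card (H0 \<inter> ?R \<omega>))"
    proof (rule AE_I2)
      fix \<omega> assume "\<omega> \<in> space M"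
      then have "V N \<omega> = real (card (H0 \<inter> ?R \<omega>))" if "T \<omega> \<le> N" for N
        by (simp only: V_eq min_absorb2[OF that])
      then show "(\<lambda>N. V N \<omega>) \<longlonglongrightarrow> real (card (H0 \<inter> ?R \<omega>))"
        by (intro tendsto_eventually) (auto simp: eventually_sequentially)
    qed
    show "AE \<omega> in M. norm (V N \<omega>) \<le> real (T \<omega>)" for N
    proof (rule AE_I2)
      fix \<omega> assume "\<omega> \<in> space M"
      then show "norm (V N \<omega>) \<le> real (T \<omega>)"
        using V_eq card_filter_atLeastAtMost_le[where n="min N (T \<omega>)" and m="T \<omega>" and S=H0] by simp
    qed
    show "V N \<in> borel_measurable M" for N
      unfolding V_def using rej A by (intro borel_measurable_sum borel_measurable_times borel_measurable_indicator) auto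
    show "integrable M (\<lambda>\<omega>. real (T \<omega>))"
      by (rule T)
  qed (rule borel_measurable_card_stopped[OF measurable_count_space_of_integrable[OF T] rej])
  moreover have "(\<integral>\<omega>. V N \<omega> \<partial>M) \<le> \<alpha> * (\<integral>\<omega>. ?D \<omega> \<partial>M)" for N
    unfolding V_def by (rule integral_truncated_null_rejections_le[OF assms(1) A rej e null budget \<open>0 \<le> \<alpha>\<close> D])
  ultimately have "(\<integral>\<omega>. real (card (H0 \<inter> ?R \<omega>)) \<partial>M) \<le> \<alpha> * (\<integral>\<omega>. ?D \<omega> \<partial>M)"
    by (intro LIMSEQ_le_const2) auto
  moreover have "1 \<le> (\<integral>\<omega>. ?D \<omega> \<partial>M)"
    using integral_mono[OF _ D, of "\<lambda>_. 1"] by (simp add: prob_space)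
  ultimately show ?thesis
    by (simp only: pos_divide_le_eq[OF order.strict_trans2[OF zero_less_one]] mult.commute)
qed

theorem theorem2:
  fixes M :: "'a measure"
    and P al la ta :: "nat \<Rightarrow> 'a \<Rightarrow> real"
    and H0 :: "nat set"
    and \<alpha> \<epsilon> :: real
    and T :: "'a \<Rightarrow> nat"
  defines "F \<equiv> addis_filtration M P al la ta"
  assumes "prob_space M"
    and "\<alpha> \<in> {0<..<1}"
    and P_meas: "\<And>j. j \<ge> 1 \<Longrightarrow> P j \<in> borel_measurable M"
    and range: "\<And>j \<omega>. j \<ge> 1 \<Longrightarrow> \<omega> \<in> space M \<Longrightarrow>
                  al j \<omega> \<in> {0..1} \<and> la j \<omega> \<in> {0..1} \<and> ta j \<omega> \<in> {0..1}"
    and predictable: "\<And>t. t \<ge> 1 \<Longrightarrow> al t \<in> borel_measurable (F (t - 1)) \<and>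
                   la t \<in> borel_measurable (F (t - 1)) \<and> ta t \<in> borel_measurable (F (t - 1))"
    and cuc: "cond_unif_conservative M F P H0"
    and order: "\<And>j \<omega>. j \<ge> 1 \<Longrightarrow> \<omega> \<in> space M \<Longrightarrow> ta j \<omega> > la j \<omega> \<and> la j \<omega> \<ge> al j \<omega>"
    and "\<epsilon> > 0"
    and gap: "\<And>j \<omega>. j \<ge> 1 \<Longrightarrow> \<omega> \<in> space M \<Longrightarrow> ta j \<omega> - la j \<omega> > \<epsilon>"
    and "stopping_time F T"
    and "integrable M (\<lambda>\<omega>. real (T \<omega>))"
    and fdp: "\<And>t \<omega>. t \<ge> 1 \<Longrightarrow> \<omega> \<in> space M \<Longrightarrow> FDP_hat_ADDIS P al la ta t \<omega> \<le> \<alpha>"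
  shows "(\<integral>\<omega>. real (card (H0 \<inter> rej_set P al (T \<omega>) \<omega>)) \<partial>M)
         / (\<integral>\<omega>. real (max (card (rej_set P al (T \<omega>) \<omega>)) 1) \<partial>M) \<le> \<alpha>"
proof -
  let ?rej = "\<lambda>j \<omega>. P j \<omega> \<le> al j \<omega>"
  let ?e = "\<lambda>j \<omega>. al j \<omega> * (if la j \<omega> < P j \<omega> \<and> P j \<omega> \<le> ta j \<omega> then 1 else 0) / (ta j \<omega> - la j \<omega>)"
  have sub: "subalgebra M (F t)" for t
    unfolding F_def using P_meas predictable by (intro subalgebra_addis_filtration) (auto simp: F_def)
  have [measurable]: "al j \<in> borel_measurable M" "la j \<in> borel_measurable M" "ta j \<in> borel_measurable M"
    "P j \<in> borel_measurable M" if "1 \<le> j" for j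
    using measurable_from_subalg[OF sub] predictable[OF that] P_meas[OF that] by auto
  have e_bounds: "0 \<le> ?e j \<omega> \<and> ?e j \<omega> \<le> 1 / \<epsilon>" if "1 \<le> j" "\<omega> \<in> space M" for j \<omega>
  proof -
    have "al j \<omega> / (ta j \<omega> - la j \<omega>) \<le> 1 / \<epsilon>"
      using range[OF that] order[OF that] gap[OF that] \<open>\<epsilon> > 0\<close> by (intro frac_le) auto
    then show ?thesis
      using range[OF that] order[OF that] \<open>\<epsilon> > 0\<close> by auto
  qed
  have null: "(\<integral>\<omega>. indicator {\<omega>\<in>space M. j \<le> T \<omega>} \<omega> * indicator {\<omega>\<in>space M. ?rej j \<omega>} \<omega> \<partial>M)
      \<le> (\<integral>\<omega>. indicator {\<omega>\<in>space M. j \<le> T \<omega>} \<omega> * ?e j \<omega> \<partial>M)" if "1 \<le> j" "j \<in> H0" for j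
  proof (rule cond_conservative_integral_le_addis[where K=1 and \<epsilon>=\<epsilon>, OF \<open>prob_space M\<close> sub])
    show "cond_conservative M (F (j - 1)) (P j)"
      using cond_unif_conservativeD[OF cuc that(2,1)] .
    have "{\<omega>\<in>space M. j \<le> T \<omega>} \<in> sets (F (j - 1))"
      using stopping_time_ge_sets[OF \<open>stopping_time F T\<close> that(1)] by (simp add: F_def)
    then show "(indicator {\<omega>\<in>space M. j \<le> T \<omega>} :: 'a \<Rightarrow> real) \<in> borel_measurable (F (j - 1))"
      by measurable
  qed (use that P_meas predictable range order gap \<open>\<epsilon> > 0\<close> in \<open>auto simp: less_imp_le indicator_def\<close>)
  have budget: "(\<Sum>j\<in>{1..t}. ?e j \<omega>) \<le> \<alpha> * real (max (card {j\<in>{1..t}. ?rej j \<omega>}) 1)"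
    if "1 \<le> t" "\<omega> \<in> space M" for t \<omega>
    using fdp[OF that] by (simp add: FDP_hat_ADDIS_def rej_set_def divide_le_eq mult.commute)
  show ?thesis
    unfolding rej_set_def
    by (rule stopped_mFDR_le[where B="1 / \<epsilon>", OF \<open>prob_space M\<close> \<open>integrable M _\<close> _ _ e_bounds null budget])
      (use \<open>\<alpha> \<in> {0<..<1}\<close> in auto)
qed

end
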